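(* Let $P$ be a finite poset, let $D$ be a comparability digraph for $P$, let $\mu$ be a probability distribution on the chains of $P$ and let $\mathcal{C}_\mu$ be a random chain chosen according to $\mu$. Suppose that $\mathbb{P}(x\in \mathcal{C}_\mu)>0$ for every $x\in P$. Then for every set $S\subseteq P$, \[\mathrm{comp}(S)\geq \left({\max_{(x,y)\in E(D)}\mathbb{P}\left(y\in \mathcal{C}_\mu\mid x\in\mathcal{C}_\mu\right)}\right)^{-1}\left(|S| - \left({\min_{x\in P}\mathbb{P}\left(x\in\mathcal{C}_\mu\right)}\right)^{-1}\right).\]
   Context: A chain in a poset is a set of pairwise comparable elements. A comparability digraph for a poset $P$ is a directed graph $D$ with vertex set $P$ such that every arc $(x,y)\in E(D)$ joins comparable elements $x,y$, and for every pair of distinct comparable elements $x,y\in P$ exactly one of the arcs $(x,y)$, $(y,x)$ lies in $E(D)$ (the direction of an arc need not agree with the order). For $S\subseteq P$, $\mathrm{comp}(S)$ is the number of unordered pairs of distinct comparable elements of $S$. *)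

theory Defs
  imports "HOL-Probability.Probability"
begin

definition partial_order_on_set :: "'a set \<Rightarrow> ('a \<Rightarrow> 'a \<Rightarrow> bool) \<Rightarrow> bool" where
  "partial_order_on_set P le \<longleftrightarrow>
     (\<forall>x\<in>P. le x x) \<and>
     (\<forall>x\<in>P. \<forall>y\<in>P. le x y \<and> le y x \<longrightarrow> x = y) \<and>
     (\<forall>x\<in>P. \<forall>y\<in>P. \<forall>z\<in>P. le x y \<and> le y z \<longrightarrow> le x z)"

definition comparable :: "('a \<Rightarrow> 'a \<Rightarrow> bool) \<Rightarrow> 'a \<Rightarrow> 'a \<Rightarrow> bool" where
  "comparable le x y \<longleftrightarrow> le x y \<or> le y x"

definition is_chain :: "'a set \<Rightarrow> ('a \<Rightarrow> 'a \<Rightarrow> bool) \<Rightarrow> 'a set \<Rightarrow> bool" where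
  "is_chain P le C \<longleftrightarrow> C \<subseteq> P \<and> (\<forall>x\<in>C. \<forall>y\<in>C. comparable le x y)"

definition comparability_digraph :: "'a set \<Rightarrow> ('a \<Rightarrow> 'a \<Rightarrow> bool) \<Rightarrow> ('a \<times> 'a) set \<Rightarrow> bool" where
  "comparability_digraph P le E \<longleftrightarrow>
     (\<forall>(x,y)\<in>E. x \<in> P \<and> y \<in> P \<and> x \<noteq> y \<and> comparable le x y) \<and>
     (\<forall>x\<in>P. \<forall>y\<in>P. x \<noteq> y \<and> comparable le x y \<longrightarrow>
        (((x,y) \<in> E) \<noteq> ((y,x) \<in> E)))"

definition comp :: "('a \<Rightarrow> 'a \<Rightarrow> bool) \<Rightarrow> 'a set \<Rightarrow> nat" where
  "comp le S = card {{x, y} | x y. x \<in> S \<and> y \<in> S \<and> x \<noteq> y \<and> comparable le x y}"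

end

theory Submission
  imports Defs
begin

text \<open>Write \<open>p x\<close> for the probability that \<open>x\<close> lies in the random chain. Within a single chain
  \<open>C\<close>, any two elements of \<open>S \<inter> C\<close> are joined by an arc, so at most one element of \<open>S \<inter> C\<close> has
  no out-neighbour in \<open>S \<inter> C\<close>; charging \<open>1 / p x\<close> for each remaining element to one of its
  arcs gives \<open>\<Sum>x\<in>S \<inter> C. 1 / p x \<le> 1 / min p + \<Sum>(x, y) arc in S \<inter> C. 1 / p x\<close>. Taking
  expectations, the left side becomes \<open>|S|\<close> and the arc term becomes the sum of the conditional
  probabilities \<open>P(y \<in> C | x \<in> C)\<close> over the arcs inside \<open>S\<close>, each at most their maximum; and
  the arcs inside \<open>S\<close> inject into the comparable pairs of \<open>S\<close>.\<close>

lemma comparability_digraph_unique_sink: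
  assumes D: "comparability_digraph P le E" and "K \<subseteq> P"
    and chain: "\<forall>x\<in>K. \<forall>y\<in>K. comparable le x y"
    and "z \<in> K" "z' \<in> K" and "\<forall>y\<in>K. (z, y) \<notin> E" "\<forall>y\<in>K. (z', y) \<notin> E"
  shows "z = z'"
proof (rule ccontr)
  assume "z \<noteq> z'"
  moreover have "z \<in> P" "z' \<in> P" "comparable le z z'" using assms by auto
  ultimately have "(z, z') \<in> E \<or> (z', z) \<in> E"
    using D unfolding comparability_digraph_def by blast
  then show False using assms by blast
qed

lemma card_arcs_le_comp:
  assumes D: "comparability_digraph P le E" and "S \<subseteq> P" and "finite S"
  shows "card {(x, y)\<in>E. x \<in> S \<and> y \<in> S} \<le> comp le S"
  unfolding comp_def
proof (rule card_inj_on_le)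
  show "inj_on (\<lambda>(x, y). {x, y}) {(x, y)\<in>E. x \<in> S \<and> y \<in> S}"
  proof (rule inj_onI, clarsimp)
    fix x y u v assume "(x, y) \<in> E" "(u, v) \<in> E" "{x, y} = {u, v}"
    then show "x = u \<and> y = v"
      using D unfolding comparability_digraph_def doubleton_eq_iff by blast
  qed
  show "(\<lambda>(x, y). {x, y}) ` {(x, y)\<in>E. x \<in> S \<and> y \<in> S}
      \<subseteq> {{x, y} |x y. x \<in> S \<and> y \<in> S \<and> x \<noteq> y \<and> comparable le x y}"
    using D unfolding comparability_digraph_def by fastforce
  show "finite {{x, y} |x y. x \<in> S \<and> y \<in> S \<and> x \<noteq> y \<and> comparable le x y}"
    by (rule finite_subset[of _ "Pow S"]) (auto simp: \<open>finite S\<close>)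
qed

lemma chain_sum_le_sum_arcs:
  fixes f :: "'a \<Rightarrow> real"
  assumes D: "comparability_digraph P le E" and finK: "finite K" and KP: "K \<subseteq> P"
    and chain: "\<forall>x\<in>K. \<forall>y\<in>K. comparable le x y"
    and nonneg: "\<forall>x\<in>K. 0 \<le> f x" and bound: "\<forall>x\<in>K. f x \<le> B" and "0 \<le> B"
  shows "(\<Sum>x\<in>K. f x) \<le> B + (\<Sum>(x, y)\<in>{(x, y)\<in>E. x \<in> K \<and> y \<in> K}. f x)"
proof -
  define A where "A = {(x, y)\<in>E. x \<in> K \<and> y \<in> K}"
  define Z where "Z = {z\<in>K. \<forall>y\<in>K. (z, y) \<notin> E}"
  have finA: "finite A"
    by (rule finite_subset[of _ "K \<times> K"]) (auto simp: A_def finK)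
  have "(\<Sum>x\<in>Z. f x) \<le> B"
  proof (cases "Z = {}")
    case False
    then obtain z where "z \<in> Z" by blast
    have "Z = {z}"
    proof (intro equalityI subsetI)
      fix z' assume "z' \<in> Z"
      with \<open>z \<in> Z\<close> have "z' = z"
        using comparability_digraph_unique_sink[OF D KP chain, of z' z] unfolding Z_def by simp
      then show "z' \<in> {z}" by simp
    qed (use \<open>z \<in> Z\<close> in simp)
    moreover have "z \<in> K" using \<open>z \<in> Z\<close> unfolding Z_def by simp
    ultimately show ?thesis using bound by simp
  qed (simp add: \<open>0 \<le> B\<close>)
  moreover have "(\<Sum>x\<in>K - Z. f x) \<le> (\<Sum>a\<in>A. f (fst a))"
  proof -
    have "K - Z \<subseteq> fst ` A"
    proof
      fix x assume "x \<in> K - Z"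
      then obtain y where "y \<in> K" "(x, y) \<in> E" unfolding Z_def by blast
      with \<open>x \<in> K - Z\<close> have "(x, y) \<in> A" unfolding A_def by simp
      then show "x \<in> fst ` A" by force
    qed
    then have "(\<Sum>x\<in>K - Z. f x) \<le> (\<Sum>x\<in>fst ` A. f x)"
      using finA nonneg by (intro sum_mono2) (auto simp: A_def)
    also have "\<dots> \<le> (\<Sum>a\<in>A. f (fst a))"
      using sum_image_le[OF finA, of f fst] nonneg by (auto simp: A_def o_def)
    finally show ?thesis .
  qed
  moreover have "(\<Sum>x\<in>K. f x) = (\<Sum>x\<in>K - Z. f x) + (\<Sum>x\<in>Z. f x)"
    using sum.subset_diff[of Z K f] finK unfolding Z_def by auto
  ultimately show ?thesis
    unfolding A_def by (simp add: case_prod_beta')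
qed

lemma prob_eq_sum_pmf:
  assumes "finite (set_pmf \<mu>)"
  shows "measure_pmf.prob \<mu> X = (\<Sum>C\<in>{C \<in> set_pmf \<mu>. C \<in> X}. pmf \<mu> C)"
proof -
  have "measure_pmf.prob \<mu> X = measure_pmf.prob \<mu> (X \<inter> set_pmf \<mu>)"
    by (rule measure_Int_set_pmf[symmetric])
  also have "\<dots> = sum (pmf \<mu>) (X \<inter> set_pmf \<mu>)"
    using assms by (simp add: measure_measure_pmf_finite)
  also have "X \<inter> set_pmf \<mu> = {C \<in> set_pmf \<mu>. C \<in> X}" by blast
  finally show ?thesis .
qed

lemma sum_prob_divide_eq_sum_pmf:
  fixes w :: "'b \<Rightarrow> real"
  assumes "finite X" and "finite (set_pmf \<mu>)"
  shows "(\<Sum>x\<in>X. measure_pmf.prob \<mu> {C. R x C} / w x)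
    = (\<Sum>C\<in>set_pmf \<mu>. pmf \<mu> C * (\<Sum>x\<in>{x\<in>X. R x C}. 1 / w x))"
proof -
  have "(\<Sum>x\<in>X. measure_pmf.prob \<mu> {C. R x C} / w x)
      = (\<Sum>x\<in>X. \<Sum>C\<in>{C\<in>set_pmf \<mu>. R x C}. pmf \<mu> C / w x)"
    using assms(2) by (simp add: prob_eq_sum_pmf sum_divide_distrib)
  also have "\<dots> = (\<Sum>C\<in>set_pmf \<mu>. pmf \<mu> C * (\<Sum>x\<in>{x\<in>X. R x C}. 1 / w x))"
    unfolding sum.swap_restrict[OF assms] by (simp add: sum_distrib_left)
  finally show ?thesis .
qed

lemma card_minus_inverse_le_sum_conditional:
  fixes \<mu> :: "'a set pmf"
  assumes finP: "finite P" and D: "comparability_digraph P le E"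
    and chains: "\<forall>C\<in>set_pmf \<mu>. is_chain P le C" and SP: "S \<subseteq> P"
    and "0 < m" and m_le: "\<forall>x\<in>P. m \<le> measure_pmf.prob \<mu> {C. x \<in> C}"
  shows "real (card S) - 1 / m
    \<le> (\<Sum>(x, y)\<in>{(x, y)\<in>E. x \<in> S \<and> y \<in> S}.
          measure_pmf.prob \<mu> {C. x \<in> C \<and> y \<in> C} / measure_pmf.prob \<mu> {C. x \<in> C})"
proof -
  define p where "p x = measure_pmf.prob \<mu> {C. x \<in> C}" for x
  define T where "T = set_pmf \<mu>"
  define A where "A = {(x, y)\<in>E. x \<in> S \<and> y \<in> S}"
  define K where "K C = {x\<in>S. x \<in> C}" for C
  have finT: "finite T"
    using chains finP unfolding T_def is_chain_def by (auto intro: finite_subset[of _ "Pow P"])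
  have finS: "finite S" using finP SP by (rule rev_finite_subset)
  have finA: "finite A"
    by (rule finite_subset[of _ "S \<times> S"]) (auto simp: A_def finS)
  have p_pos: "0 < p x" if "x \<in> S" for x
    using that SP m_le \<open>0 < m\<close> unfolding p_def by force
  have "real (card S) = (\<Sum>x\<in>S. p x / p x)"
    using p_pos by (simp add: less_le)
  also have "\<dots> = (\<Sum>C\<in>T. pmf \<mu> C * (\<Sum>x\<in>K C. 1 / p x))"
    unfolding p_def T_def K_def using finS finT[unfolded T_def]
    by (rule sum_prob_divide_eq_sum_pmf)
  finally have card_S: "real (card S) = (\<Sum>C\<in>T. pmf \<mu> C * (\<Sum>x\<in>K C. 1 / p x))" .
  have inverse_m: "1 / m = (\<Sum>C\<in>T. pmf \<mu> C * (1 / m))"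
    using sum_pmf_eq_1[OF finT[unfolded T_def] order_refl]
    by (simp add: T_def flip: sum_divide_distrib)
  have "(\<Sum>(x, y)\<in>A. measure_pmf.prob \<mu> {C. x \<in> C \<and> y \<in> C} / p x)
      = (\<Sum>a\<in>A. measure_pmf.prob \<mu> {C. fst a \<in> C \<and> snd a \<in> C} / p (fst a))"
    by (simp add: case_prod_beta')
  also have "\<dots> = (\<Sum>C\<in>T. pmf \<mu> C * (\<Sum>a\<in>{a\<in>A. fst a \<in> C \<and> snd a \<in> C}. 1 / p (fst a)))"
    unfolding T_def using finA finT[unfolded T_def] by (rule sum_prob_divide_eq_sum_pmf)
  also have "\<dots> = (\<Sum>C\<in>T. pmf \<mu> C *
      (\<Sum>(x, y)\<in>{(x, y)\<in>E. x \<in> K C \<and> y \<in> K C}. 1 / p x))"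
    by (intro sum.cong) (auto simp: A_def K_def case_prod_beta' intro!: sum.cong)
  finally have arcs:
    "(\<Sum>(x, y)\<in>A. measure_pmf.prob \<mu> {C. x \<in> C \<and> y \<in> C} / p x)
      = (\<Sum>C\<in>T. pmf \<mu> C * (\<Sum>(x, y)\<in>{(x, y)\<in>E. x \<in> K C \<and> y \<in> K C}. 1 / p x))" .
  have "(\<Sum>x\<in>K C. 1 / p x) - 1 / m
      \<le> (\<Sum>(x, y)\<in>{(x, y)\<in>E. x \<in> K C \<and> y \<in> K C}. 1 / p x)" if "C \<in> T" for C
  proof -
    have "K C \<subseteq> P" and "\<forall>x\<in>K C. \<forall>y\<in>K C. comparable le x y"
      using SP chains that unfolding K_def T_def is_chain_def by auto
    moreover have "\<forall>x\<in>K C. 1 / p x \<le> 1 / m"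
    proof
      fix x assume "x \<in> K C"
      then have "m \<le> p x" using SP m_le unfolding K_def p_def by auto
      with \<open>0 < m\<close> show "1 / p x \<le> 1 / m" by (simp add: frac_le)
    qed
    moreover have "finite (K C)" and "\<forall>x\<in>K C. 0 \<le> 1 / p x"
      using finS p_pos unfolding K_def by (auto simp: less_imp_le)
    ultimately show ?thesis
      using chain_sum_le_sum_arcs[OF D, of "K C" "\<lambda>x. 1 / p x" "1 / m"] \<open>0 < m\<close> by simp
  qed
  then have "(\<Sum>C\<in>T. pmf \<mu> C * ((\<Sum>x\<in>K C. 1 / p x) - 1 / m))
      \<le> (\<Sum>C\<in>T. pmf \<mu> C * (\<Sum>(x, y)\<in>{(x, y)\<in>E. x \<in> K C \<and> y \<in> K C}. 1 / p x))"
    by (intro sum_mono mult_left_mono) auto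
  moreover have "real (card S) - 1 / m = (\<Sum>C\<in>T. pmf \<mu> C * ((\<Sum>x\<in>K C. 1 / p x) - 1 / m))"
    by (subst card_S, subst inverse_m) (simp add: right_diff_distrib sum_subtractf)
  ultimately show ?thesis
    using arcs unfolding A_def p_def by linarith
qed

theorem mainTheorem7:
  fixes P :: "'a set" and le :: "'a \<Rightarrow> 'a \<Rightarrow> bool" and E :: "('a \<times> 'a) set"
    and \<mu> :: "'a set pmf" and S :: "'a set"
  assumes finP: "finite P"
    and po: "partial_order_on_set P le"
    and D: "comparability_digraph P le E"
    and chains: "\<forall>C\<in>set_pmf \<mu>. is_chain P le C"
    and pos: "\<forall>x\<in>P. measure_pmf.prob \<mu> {C. x \<in> C} > 0"
    and SP: "S \<subseteq> P"
  shows "let p = (\<lambda>x. measure_pmf.prob \<mu> {C. x \<in> C});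
             cond = (\<lambda>(x, y). measure_pmf.prob \<mu> {C. x \<in> C \<and> y \<in> C} / p x);
             M = (if E = {} then 0 else Max (cond ` E));
             m = Min (p ` P)
         in real (comp le S) \<ge> (1 / M) * (real (card S) - 1 / m)"
proof -
  define p where "p x = measure_pmf.prob \<mu> {C. x \<in> C}" for x
  define cond where "cond = (\<lambda>(x, y). measure_pmf.prob \<mu> {C. x \<in> C \<and> y \<in> C} / p x)"
  define M where "M = (if E = {} then 0 else Max (cond ` E))"
  define m where "m = Min (p ` P)"
  define A where "A = {(x, y)\<in>E. x \<in> S \<and> y \<in> S}"
  have "(1 / M) * (real (card S) - 1 / m) \<le> real (comp le S)"
  proof (cases "E = {}")
    case False
    have EP: "E \<subseteq> P \<times> P" using D unfolding comparability_digraph_def by auto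
    with False have "P \<noteq> {}" by auto
    then have m_pos: "0 < m" and m_le: "\<forall>x\<in>P. m \<le> p x"
      using finP pos unfolding m_def p_def by auto
    have finE: "finite E" using EP finP by (meson finite_SigmaI finite_subset)
    have cond_le_M: "cond a \<le> M" if "a \<in> E" for a
      using that False finE unfolding M_def by simp
    have M_nonneg: "0 \<le> M"
    proof -
      obtain e where "e \<in> E" using False by blast
      have "0 \<le> cond e" by (simp add: cond_def p_def case_prod_beta')
      with cond_le_M[OF \<open>e \<in> E\<close>] show ?thesis by linarith
    qed
    have "real (card S) - 1 / m \<le> sum cond A"
      using card_minus_inverse_le_sum_conditional[OF finP D chains SP m_pos] m_le
      unfolding A_def cond_def p_def by blast
    also have "\<dots> \<le> (\<Sum>a\<in>A. M)"
      using cond_le_M by (intro sum_mono) (auto simp: A_def)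
    also have "\<dots> \<le> M * comp le S"
      using card_arcs_le_comp[OF D SP] finite_subset[OF SP finP] M_nonneg
      unfolding A_def by (simp add: mult.commute mult_left_mono)
    finally show ?thesis
      using M_nonneg by (cases "M = 0") (simp_all add: divide_le_eq mult.commute)
  qed (simp add: M_def)
  then show ?thesis
    unfolding Let_def p_def cond_def M_def m_def by simp
qed

end
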